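(* Let $n>0$ be the total computational load and let $p_0,\dots,p_{k-1}$ be $k$ processing units (PUs), each with a speed $c_s(p_i)>0$ and a memory capacity $m_{cap}(p_i)>0$. Run the following greedy procedure. First sort the PUs so that $c_s(p_0)/m_{cap}(p_0)\ge c_s(p_1)/m_{cap}(p_1)\ge\dots\ge c_s(p_{k-1})/m_{cap}(p_{k-1})$. Initialize $\mathrm{jLoad}\gets n$ and $\mathrm{jSpeed}\gets C_s=\sum_{i=0}^{k-1}c_s(p_i)$. Then for $i=0,1,\dots,k-1$ in order: - compute $\mathrm{desW}(b_i)=c_s(p_i)\cdot \mathrm{jLoad}/\mathrm{jSpeed}$; - if $\mathrm{desW}(b_i)>m_{cap}(p_i)$, set $tw(b_i)\gets m_{cap}(p_i)$ and call $p_i$ saturated; otherwise set $tw(b_i)\gets \mathrm{desW}(b_i)$ and call $p_i$ non-saturated; - update $\mathrm{jLoad}\gets\mathrm{jLoad}-tw(b_i)$ and $\mathrm{jSpeed}\gets\mathrm{jSpeed}-c_s(p_i)$. Then no saturated PU appears after a non-saturated PU in the sorted sequence. That is, if $p_i$ is non-saturated, then every $p_j$ with $j>i$ is also non-saturated.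
   Context: This procedure computes target block weights $tw(b_i)$ for distributing an application graph with $n$ unit-weight vertices over heterogeneous PUs. Block $b_i$ is assigned to PU $p_i$. *)

theory Defs
  imports Complex_Main
begin

text \<open>Greedy target-weight procedure. PUs are indexed 0..k-1 (already sorted).
  cs i = speed, mcap i = memory capacity, n = total load.
  tw_state cs mcap n k i = (jLoad, jSpeed) before iteration i.\<close>

definition desW :: "(nat \<Rightarrow> real) \<Rightarrow> real \<Rightarrow> real \<Rightarrow> nat \<Rightarrow> real" where
  "desW cs jLoad jSpeed i = cs i * jLoad / jSpeed"

definition tw_step :: "(nat \<Rightarrow> real) \<Rightarrow> (nat \<Rightarrow> real) \<Rightarrow> real \<Rightarrow> real \<Rightarrow> nat \<Rightarrow> real" where
  "tw_step cs mcap jLoad jSpeed i =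
     (if desW cs jLoad jSpeed i > mcap i then mcap i else desW cs jLoad jSpeed i)"

fun tw_state :: "(nat \<Rightarrow> real) \<Rightarrow> (nat \<Rightarrow> real) \<Rightarrow> real \<Rightarrow> nat \<Rightarrow> nat \<Rightarrow> real \<times> real" where
  "tw_state cs mcap n k 0 = (n, (\<Sum>i<k. cs i))"
| "tw_state cs mcap n k (Suc i) =
     (let (jLoad, jSpeed) = tw_state cs mcap n k i
      in (jLoad - tw_step cs mcap jLoad jSpeed i, jSpeed - cs i))"

definition saturated :: "(nat \<Rightarrow> real) \<Rightarrow> (nat \<Rightarrow> real) \<Rightarrow> real \<Rightarrow> nat \<Rightarrow> nat \<Rightarrow> bool" where
  "saturated cs mcap n k i =
     (let (jLoad, jSpeed) = tw_state cs mcap n k i in desW cs jLoad jSpeed i > mcap i)"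

end

theory Submission
  imports Defs
begin

(* While PUs are non-saturated, each receives load in proportion to its speed, so the ratio
   jLoad / jSpeed of remaining load to remaining speed stays constant. A PU p_i is saturated
   exactly when this ratio exceeds mcap_i / cs_i, and the sorting makes mcap_i / cs_i
   nondecreasing in i. Hence once the ratio is at most mcap_i / cs_i, it stays below every
   later threshold. *)

definition load_ratio :: "(nat \<Rightarrow> real) \<Rightarrow> (nat \<Rightarrow> real) \<Rightarrow> real \<Rightarrow> nat \<Rightarrow> nat \<Rightarrow> real" where
  "load_ratio cs mcap n k i = fst (tw_state cs mcap n k i) / snd (tw_state cs mcap n k i)"

lemma snd_tw_state:
  assumes "i \<le> k"
  shows "snd (tw_state cs mcap n k i) = (\<Sum>l = i..<k. cs l)"
  using assms
proof (induction i)
  case 0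
  then show ?case by (simp add: atLeast0LessThan)
next
  case (Suc i)
  then show ?case
    by (simp add: case_prod_beta Let_def sum.atLeast_Suc_lessThan)
qed

lemma snd_tw_state_pos:
  assumes "\<And>l. l < k \<Longrightarrow> cs l > 0" and "i < k"
  shows "snd (tw_state cs mcap n k i) > 0"
  using assms by (simp add: snd_tw_state) (intro sum_pos; auto)

lemma saturated_iff_load_ratio:
  assumes "cs i > 0"
  shows "saturated cs mcap n k i \<longleftrightarrow> mcap i / cs i < load_ratio cs mcap n k i"
  using assms
  by (simp add: saturated_def load_ratio_def desW_def case_prod_beta pos_divide_less_eq
      mult.commute times_divide_eq_right)

lemma proportional_share_preserves_ratio:
  fixes L S c :: real
  assumes "S \<noteq> 0" and "S \<noteq> c"
  shows "(L - c * L / S) / (S - c) = L / S"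
proof -
  have "L - c * L / S = L / S * (S - c)"
    using assms(1) by (simp add: field_simps)
  then show ?thesis
    using assms(2) by simp
qed

lemma load_ratio_Suc_if_not_saturated:
  assumes "\<And>l. l < k \<Longrightarrow> cs l > 0" and "Suc i < k"
    and "\<not> saturated cs mcap n k i"
  shows "load_ratio cs mcap n k (Suc i) = load_ratio cs mcap n k i"
proof -
  obtain L S where state: "tw_state cs mcap n k i = (L, S)"
    by fastforce
  have "snd (tw_state cs mcap n k i) > 0" "snd (tw_state cs mcap n k (Suc i)) > 0"
    using assms(1,2) by (simp_all add: snd_tw_state_pos del: tw_state.simps)
  then have "S > 0" "S - cs i > 0"
    using state by (simp_all add: case_prod_beta Let_def)
  have "tw_state cs mcap n k (Suc i) = (L - cs i * L / S, S - cs i)"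
    using assms(3) state by (simp add: saturated_def tw_step_def desW_def)
  with \<open>S > 0\<close> \<open>S - cs i > 0\<close> show ?thesis
    using state by (simp add: load_ratio_def proportional_share_preserves_ratio)
qed

lemma not_saturated_Suc:
  assumes cs_pos: "\<And>l. l < k \<Longrightarrow> cs l > 0"
    and mcap_pos: "\<And>l. l < k \<Longrightarrow> mcap l > 0"
    and sorted: "cs (Suc i) / mcap (Suc i) \<le> cs i / mcap i"
    and "Suc i < k"
    and not_sat: "\<not> saturated cs mcap n k i"
  shows "\<not> saturated cs mcap n k (Suc i)"
proof -
  have pos: "cs i > 0" "cs (Suc i) > 0" "mcap i > 0" "mcap (Suc i) > 0"
    using cs_pos mcap_pos \<open>Suc i < k\<close> by auto
  have "load_ratio cs mcap n k (Suc i) = load_ratio cs mcap n k i"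
    using load_ratio_Suc_if_not_saturated[OF cs_pos \<open>Suc i < k\<close> not_sat] .
  also have "\<dots> \<le> mcap i / cs i"
    using not_sat pos(1) by (simp add: saturated_iff_load_ratio)
  also have "\<dots> \<le> mcap (Suc i) / cs (Suc i)"
    using sorted pos by (simp add: field_simps)
  finally show ?thesis
    using pos(2) by (simp add: saturated_iff_load_ratio)
qed

theorem lemma1:
  fixes cs mcap :: "nat \<Rightarrow> real" and n :: nat and k :: nat
  assumes "n > 0"
    and "\<And>i. i < k \<Longrightarrow> cs i > 0"
    and "\<And>i. i < k \<Longrightarrow> mcap i > 0"
    and "\<And>i j. i \<le> j \<Longrightarrow> j < k \<Longrightarrow> cs j / mcap j \<le> cs i / mcap i"
    and "i < j" and "j < k"
    and "\<not> saturated cs mcap (real n) k i"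
  shows "\<not> saturated cs mcap (real n) k j"
proof -
  have "\<not> saturated cs mcap (real n) k m" if "i \<le> m" "m < k" for m
    using that
  proof (induction m rule: dec_induct)
    case base
    show ?case using assms(7) .
  next
    case (step m)
    then show ?case
      using not_saturated_Suc[OF assms(2,3)] assms(4)[of m "Suc m"] by simp
  qed
  then show ?thesis
    using assms(5,6) by simp
qed

end
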